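(* Let $V$ be a countable set, $\Omega_0$ a finite set, $\Omega=\Omega_0^V$ with product $\sigma$-algebra $\mathcal F$, let $q\in\mathbb N$, and let $\Lambda\subset V$. Let $\gamma_\Lambda$ be a proper probability $q$-kernel. For $\eta\in\Omega$ put $\Omega_\Lambda^{\eta}=\{\sigma\in\Omega:\ \sigma_{\Lambda^c}=\eta_{\Lambda^c}\}$ and, for $\eta_1,\dots,\eta_q\in\Omega$, $\Omega_\Lambda^{\eta_1,\dots,\eta_q}=\bigcup_{i=1}^q\Omega_\Lambda^{\eta_i}$. Then for all $\eta_1,\dots,\eta_q\in\Omega$ the probability measure $\gamma_\Lambda(\cdot\mid\eta_1,\dots,\eta_q)$ is supported on $\Omega_\Lambda^{\eta_1,\dots,\eta_q}$, i.e. $\gamma_\Lambda(\Omega_\Lambda^{\eta_1,\dots,\eta_q}\mid\eta_1,\dots,\eta_q)=1$.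
   Context: For $\Delta\subset V$, $\mathcal F_\Delta$ denotes the $\sigma$-algebra on $\Omega$ generated by the coordinate maps $\sigma\mapsto\sigma_x$, $x\in\Delta$; $\sigma_\Delta$ denotes the restriction of $\sigma$ to $\Delta$. $\mathcal F^q=\mathcal F^{\otimes q}$ on $\Omega^q$ and $\mathcal F^q_{\Lambda^c}=(\mathcal F_{\Lambda^c})^{\otimes q}$. A probability $q$-kernel (from $\mathcal F^q_{\Lambda^c}$ to $\mathcal F$) is a map $\gamma_\Lambda:\mathcal F\times\Omega^q\to[0,1]$, $(A,(\eta_1,\dots,\eta_q))\mapsto\gamma_\Lambda(A\mid\eta_1,\dots,\eta_q)$, such that (i) $\gamma_\Lambda(\cdot\mid\eta_1,\dots,\eta_q)$ is a probability measure on $(\Omega,\mathcal F)$ for all $\eta_1,\dots,\eta_q\in\Omega$, and (ii) $\gamma_\Lambda(A\mid\cdot,\dots,\cdot)$ is $\mathcal F^q_{\Lambda^c}$-measurable for every $A\in\mathcal F$. It is proper if $\gamma_\Lambda(A\mid\eta_1,\dots,\eta_q)=\frac1q\sum_{i=1}^q\mathbf 1_A(\eta_i)$ for all $A\in\mathcal F_{\Lambda^c}$ and all $\eta_1,\dots,\eta_q$. *)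

theory Defs
  imports "HOL-Analysis.Analysis"
begin

text \<open>Configuration space Omega = Omega0^V with the product sigma-algebra.
  V is modelled by a countable type 'v, Omega0 by a finite type 'a.\<close>
definition Omega :: "('v \<Rightarrow> 'a) measure" where
  "Omega = (\<Pi>\<^sub>M x\<in>(UNIV::'v set). count_space (UNIV::'a set))"

definition F_on :: "'v set \<Rightarrow> ('v \<Rightarrow> 'a) set set" where
  "F_on D = sigma_sets UNIV {(\<lambda>\<sigma>. \<sigma> x) -` B | x B. x \<in> D}"

definition M_on :: "'v set \<Rightarrow> ('v \<Rightarrow> 'a) measure" where
  "M_on D = measure_of UNIV (F_on D) (\<lambda>_. 0)"

text \<open>q-tuples (eta_1,...,eta_q) are functions on {..<q} (indices shifted to 0..q-1);
  Omega^q carries the product of the sigma-algebras F_{Lambda^c}.\<close>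
definition prob_q_kernel ::
  "nat \<Rightarrow> 'v set \<Rightarrow> (('v \<Rightarrow> 'a) set \<Rightarrow> (nat \<Rightarrow> 'v \<Rightarrow> 'a) \<Rightarrow> real) \<Rightarrow> bool" where
  "prob_q_kernel q L \<gamma> \<longleftrightarrow>
     (\<forall>\<eta> \<in> PiE {..<q} (\<lambda>_. UNIV).
        (\<forall>A \<in> sets Omega. 0 \<le> \<gamma> A \<eta> \<and> \<gamma> A \<eta> \<le> 1) \<and>
        measure_space UNIV (sets Omega) (\<lambda>A. ennreal (\<gamma> A \<eta>)) \<and>
        \<gamma> UNIV \<eta> = 1) \<and>
     (\<forall>A \<in> sets Omega.
        (\<lambda>\<eta>. \<gamma> A \<eta>) \<in> borel_measurable (\<Pi>\<^sub>M i\<in>{..<q}. M_on (- L)))"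

definition proper_q_kernel ::
  "nat \<Rightarrow> 'v set \<Rightarrow> (('v \<Rightarrow> 'a) set \<Rightarrow> (nat \<Rightarrow> 'v \<Rightarrow> 'a) \<Rightarrow> real) \<Rightarrow> bool" where
  "proper_q_kernel q L \<gamma> \<longleftrightarrow>
     (\<forall>A \<in> F_on (- L). \<forall>\<eta> \<in> PiE {..<q} (\<lambda>_. UNIV).
        \<gamma> A \<eta> = (1 / real q) * (\<Sum>i<q. indicator A (\<eta> i)))"

definition Omega_agree :: "'v set \<Rightarrow> ('v \<Rightarrow> 'a) \<Rightarrow> ('v \<Rightarrow> 'a) set" where
  "Omega_agree L \<eta> = {\<sigma>. \<forall>x \<in> - L. \<sigma> x = \<eta> x}"

end

theory Submission
  imports Defs
begin

text \<open>Each \<open>Omega_agree L (\<eta> i)\<close> is a countable intersection of cylinder events at sites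
  outside \<open>L\<close>, so their finite union lies in \<open>F_on (- L)\<close>. Properness evaluates the kernel
  on such an event as the fraction of the boundary conditions \<open>\<eta> i\<close> it contains, and this
  event contains all of them.\<close>

lemma sigma_algebra_F_on: "sigma_algebra UNIV (F_on D)"
  unfolding F_on_def by (rule sigma_algebra_sigma_sets) auto

lemma Omega_agree_in_F_on:
  assumes "countable (- L)"
  shows "Omega_agree L \<eta> \<in> F_on (- L)"
proof -
  interpret sigma_algebra UNIV "F_on (- L)"
    by (rule sigma_algebra_F_on)
  have "Omega_agree L \<eta> = (\<Inter>x\<in>-L. (\<lambda>\<sigma>. \<sigma> x) -` {\<eta> x})"
    unfolding Omega_agree_def by auto
  also have "\<dots> \<in> F_on (- L)"
  proof (rule countable_INT'')
    show "UNIV \<in> F_on (- L)"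
      unfolding F_on_def by (rule sigma_sets_top)
    fix x assume "x \<in> - L"
    then show "(\<lambda>\<sigma>. \<sigma> x) -` {\<eta> x} \<in> F_on (- L)"
      unfolding F_on_def by (intro sigma_sets.Basic) blast
  qed (use assms in simp)
  finally show ?thesis .
qed

lemma proper_q_kernel_eq_1_if_contains_all:
  assumes "q \<ge> 1" and "proper_q_kernel q L \<gamma>"
    and "A \<in> F_on (- L)" and "\<eta> \<in> PiE {..<q} (\<lambda>_. UNIV)"
    and "\<And>i. i < q \<Longrightarrow> \<eta> i \<in> A"
  shows "\<gamma> A \<eta> = 1"
proof -
  have "\<gamma> A \<eta> = (1 / real q) * (\<Sum>i<q. indicator A (\<eta> i))"
    using assms(2-4) unfolding proper_q_kernel_def by blast
  also have "\<dots> = (1 / real q) * (\<Sum>i<q. 1)"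
    using assms(5) by simp
  also have "\<dots> = 1"
    using assms(1) by simp
  finally show ?thesis .
qed

theorem mainTheorem1:
  fixes q :: nat and L :: "'v::countable set"
    and \<gamma> :: "('v \<Rightarrow> 'a::finite) set \<Rightarrow> (nat \<Rightarrow> 'v \<Rightarrow> 'a) \<Rightarrow> real"
  assumes "q \<ge> 1"
    and "prob_q_kernel q L \<gamma>"
    and "proper_q_kernel q L \<gamma>"
  shows "\<forall>\<eta> \<in> PiE {..<q} (\<lambda>_. UNIV). \<gamma> (\<Union>i<q. Omega_agree L (\<eta> i)) \<eta> = 1"
proof
  fix \<eta> assume \<eta>: "\<eta> \<in> PiE {..<q} (\<lambda>_. UNIV :: ('v \<Rightarrow> 'a) set)"
  interpret sigma_algebra UNIV "F_on (- L)"
    by (rule sigma_algebra_F_on)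
  have "(\<Union>i<q. Omega_agree L (\<eta> i)) \<in> F_on (- L)"
    by (intro finite_UN Omega_agree_in_F_on) auto
  moreover have "\<eta> i \<in> (\<Union>i<q. Omega_agree L (\<eta> i))" if "i < q" for i
    using that unfolding Omega_agree_def by blast
  ultimately show "\<gamma> (\<Union>i<q. Omega_agree L (\<eta> i)) \<eta> = 1"
    using proper_q_kernel_eq_1_if_contains_all[OF assms(1,3) _ \<eta>] by blast
qed

end
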